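(* Let $M\in\mathbb{R}^{n\times n}$ be symmetric positive definite, let $N\ge1$, let timestep sizes $\delta_0,\delta_1,\dots,\delta_N>0$, let $\theta_0,\theta_{-1}\in\mathbb{R}^n$ be fixed, and let controls $u_1,\dots,u_N$ be fixed, where frame $i$ uses control $u_{\iota(i)}$. Let $\bar P(\cdot,u):\mathbb{R}^n\to\mathbb{R}$ be twice differentiable with locally Lipschitz second derivatives and $L$-curvature bounded (for some $L>0$) for every control value $u$. For $i=1,\dots,N$ and $\theta=(\theta_1,\dots,\theta_N)$ let $$\bar E_i=\frac{1}{2\delta_i^2}\Big\|\theta_i-\big(1+\tfrac{\delta_i}{\delta_{i-1}}\big)\theta_{i-1}+\tfrac{\delta_i}{\delta_{i-1}}\theta_{i-2}\Big\|_M^2+\bar P(\theta_i,u_{\iota(i)}),$$ $\Lambda_i=\frac12\|\partial\bar E_i/\partial\theta_i\|^2$, $\Lambda(\theta)=\sum_{i=1}^N\Lambda_i$, let $G(\theta)\in\mathbb{R}^{nN}$ be the stacked vector $(\partial\bar E_1/\partial\theta_1,\dots,\partial\bar E_N/\partial\theta_N)$, and let $J(\theta)=\partial G/\partial\theta\in\mathbb{R}^{nN\times nN}$ be its Jacobian (the block matrix whose $(i,k)$ block is $\partial^2\bar E_i/\partial\theta_i\partial\theta_k$). Suppose $\delta_i<\sqrt{\sigma_{\min}(M)/L}$ for all $i=1,\dots,N$. Then: (i) for each $i$ and fixed $\theta_{i-1},\theta_{i-2}$, the function $\theta_i\mapsto\Lambda_i$ satisfies the Polyak–Łojasiewicz condition,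 i.e. there is $\mu>0$ with $\frac12\|\nabla_{\theta_i}\Lambda_i\|^2\ge\mu(\Lambda_i-\inf\Lambda_i)$ for all $\theta_i$; (ii) $\sigma_{\min}(J(\theta))$ is bounded away from zero: there is $c>0$ (not depending on $\theta$ or the controls) with $\sigma_{\min}(J(\theta))\ge c$ for all $\theta$; (iii) $\theta\mapsto\Lambda(\theta)$ satisfies the Polyak–Łojasiewicz condition on $\mathbb{R}^{nN}$.
   Context: $\|x\|_M^2=x^TMx$; $\sigma_{\min}$ denotes the smallest singular value. A function $\phi:\mathbb{R}^n\to\mathbb{R}$ is $L$-weakly convex if $\phi(x)+\frac{L}{2}\|x\|^2$ is convex; $L$-gradient continuous if $\|\nabla\phi(x)-\nabla\phi(x')\|\le L\|x-x'\|$ for all $x,x'$; $L$-curvature bounded if both hold. The map $\iota$ assigns to each frame index the index of the control used there. *)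

theory Defs
  imports "HOL-Analysis.Analysis"
begin

definition grad :: "('a::real_inner \<Rightarrow> real) \<Rightarrow> 'a \<Rightarrow> 'a" where
  "grad f x = (THE g. GDERIV f x :> g)"

definition jac :: "(real^'n \<Rightarrow> real^'m) \<Rightarrow> real^'n \<Rightarrow> real^'n^'m" where
  "jac F x = (THE D. (F has_derivative (\<lambda>h. D *v h)) (at x))"

definition Mnorm2 :: "real^'n^'n \<Rightarrow> real^'n \<Rightarrow> real" where
  "Mnorm2 M x = x \<bullet> (M *v x)"

definition sigma_min :: "real^'n^'n \<Rightarrow> real" where
  "sigma_min A = Inf {norm (A *v x) | x. norm x = 1}"

text \<open>Smallest singular value of the \<open>nN \<times> nN\<close> block matrix whose \<open>(i,k)\<close> block
  (\<open>1 \<le> i,k \<le> N\<close>) is \<open>B i k\<close>; stacked vectors are \<open>v 1, \<dots>, v N\<close>.\<close>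
definition block_sigma_min :: "nat \<Rightarrow> (nat \<Rightarrow> nat \<Rightarrow> real^'n^'n) \<Rightarrow> real" where
  "block_sigma_min N B =
     Inf {sqrt (\<Sum>i=1..N. (norm (\<Sum>k=1..N. B i k *v v k))\<^sup>2) | v.
            (\<Sum>k=1..N. (norm (v k))\<^sup>2) = 1}"

definition frame :: "real^'n \<Rightarrow> real^'n \<Rightarrow> (nat \<Rightarrow> real^'n) \<Rightarrow> int \<Rightarrow> real^'n" where
  "frame th0 thm1 th j = (if j = -1 then thm1 else if j = 0 then th0 else th (nat j))"

definition Ebar :: "real^'n^'n \<Rightarrow> (nat \<Rightarrow> real) \<Rightarrow> (real^'n \<Rightarrow> 'u \<Rightarrow> real) \<Rightarrow> (nat \<Rightarrow> 'u)
    \<Rightarrow> (nat \<Rightarrow> nat) \<Rightarrow> real^'n \<Rightarrow> real^'n \<Rightarrow> (nat \<Rightarrow> real^'n) \<Rightarrow> nat \<Rightarrow> real" where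
  "Ebar M \<delta> P u \<iota> th0 thm1 th i =
     (let r = \<delta> i / \<delta> (i - 1);
          x = frame th0 thm1 th (int i) - (1 + r) *\<^sub>R frame th0 thm1 th (int i - 1)
              + r *\<^sub>R frame th0 thm1 th (int i - 2)
      in Mnorm2 M x / (2 * (\<delta> i)\<^sup>2) + P (th i) (u (\<iota> i)))"

definition Gi where
  "Gi M \<delta> P u \<iota> th0 thm1 th i = grad (\<lambda>t. Ebar M \<delta> P u \<iota> th0 thm1 (th(i := t)) i) (th i)"

definition Lam_i where
  "Lam_i M \<delta> P u \<iota> th0 thm1 th i = (norm (Gi M \<delta> P u \<iota> th0 thm1 th i))\<^sup>2 / 2"

definition Lam where
  "Lam N M \<delta> P u \<iota> th0 thm1 th = (\<Sum>i=1..N. Lam_i M \<delta> P u \<iota> th0 thm1 th i)"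

definition Jblock where
  "Jblock M \<delta> P u \<iota> th0 thm1 th i k =
     jac (\<lambda>t. Gi M \<delta> P u \<iota> th0 thm1 (th(k := t)) i) (th k)"

definition stacked_grad_norm2 :: "nat \<Rightarrow> ((nat \<Rightarrow> real^'n) \<Rightarrow> real) \<Rightarrow> (nat \<Rightarrow> real^'n) \<Rightarrow> real" where
  "stacked_grad_norm2 N f th = (\<Sum>k=1..N. (norm (grad (\<lambda>t. f (th(k := t))) (th k)))\<^sup>2)"

end

theory Submission
  imports Defs
begin

(* The Jacobian J of the stacked gradient G = (dE_i/dtheta_i)_i is block lower triangular: its
   (i,k) block is a multiple of M, plus the Hessian of P on the diagonal. An L-Lipschitz gradient
   bounds that Hessian below by -L, and x^T M x >= sigma_min(M) |x|^2, so under the step-size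
   condition every diagonal block is coercive with constant sigma_min(M)/delta_i^2 - L > 0.
   Forward substitution then bounds |v| by a constant times |J v|, which gives (ii); backward
   substitution bounds |G| by the same constant times |J^T G| = |grad Lambda|, and since
   Lambda = |G|^2/2 >= Lambda - inf Lambda this gives (iii). Part (i) is the one-block case
   grad_{theta_i} Lambda_i = D_i^T G_i with D_i the i-th diagonal block. *)

section \<open>Quadratic forms and matrix norms\<close>

lemma inner_symmetric_matrix:
  fixes M :: "real^'n^'n"
  assumes "transpose M = M"
  shows "x \<bullet> (M *v y) = y \<bullet> (M *v x)"
  by (metis assms dot_lmul_matrix inner_commute transpose_matrix_vector)

text \<open>On \<open>real^'n^'m\<close> the norm is the Frobenius norm.\<close>

lemma norm_matrix_squared:
  fixes A :: "real^'n^'m"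
  shows "(norm A)\<^sup>2 = (\<Sum>i\<in>UNIV. \<Sum>j\<in>UNIV. (A $ i $ j)\<^sup>2)"
  by (simp add: norm_vec_def L2_set_def sum_nonneg)

lemma norm_transpose:
  fixes A :: "real^'n^'m"
  shows "norm (transpose A) = norm A"
proof -
  have "(norm (transpose A))\<^sup>2 = (norm A)\<^sup>2"
    unfolding norm_matrix_squared transpose_def by (subst sum.swap) simp
  then show ?thesis
    by simp
qed

lemma norm_matrix_vector_mult_le:
  fixes A :: "real^'n^'m"
  shows "norm (A *v x) \<le> norm A * norm x"
proof -
  have "norm (A *v x) = L2_set (\<lambda>i. \<bar>(A $ i) \<bullet> x\<bar>) UNIV"
    by (simp add: norm_vec_def matrix_vector_mult_def inner_vec_def)
  also have "\<dots> \<le> L2_set (\<lambda>i. norm x * norm (A $ i)) UNIV"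
    by (intro L2_set_mono) (metis Cauchy_Schwarz_ineq2 mult.commute, simp)
  also have "\<dots> = norm A * norm x"
    by (simp add: L2_set_right_distrib[symmetric] norm_vec_def[of A] mult.commute)
  finally show ?thesis .
qed

lemma quadratic_form_transpose:
  fixes A :: "real^'n^'n"
  shows "x \<bullet> (transpose A *v x) = x \<bullet> (A *v x)"
  by (metis dot_lmul_matrix inner_commute transpose_matrix_vector)

lemma norm_ge_of_inner_ge:
  fixes x y :: "'a::real_inner"
  assumes "m * (norm x)\<^sup>2 \<le> x \<bullet> y"
  shows "m * norm x \<le> norm y"
proof (cases "x = 0")
  case False
  have "norm x * (m * norm x) \<le> norm x * norm y"
    using assms Cauchy_Schwarz_ineq2[of x y] by (simp add: power2_eq_square mult.assoc mult.left_commute)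
  then show ?thesis
    using False by simp
qed simp

lemma nonneg_quadratic_linear_coeff_eq_0:
  fixes a c :: real
  assumes "\<And>t. 0 \<le> 2 * t * a + t\<^sup>2 * c"
  shows "a = 0"
proof (rule ccontr)
  assume "a \<noteq> 0"
  define s where "s = 1 / (\<bar>c\<bar> + 1)"
  have s: "0 < s" "s * c < 2"
    unfolding s_def by (auto simp: field_simps abs_if)
  have "0 \<le> 2 * (- a * s) * a + (- a * s)\<^sup>2 * c"
    by (rule assms)
  also have "\<dots> = a\<^sup>2 * s * (s * c - 2)"
    by (simp add: algebra_simps power2_eq_square)
  also have "\<dots> < 0"
    using \<open>a \<noteq> 0\<close> s by (intro mult_pos_neg) auto
  finally show False
    by simp
qed

lemma psd_quadratic_form_eq_0D:
  fixes A :: "real^'n^'n"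
  assumes sym: "transpose A = A" and psd: "\<And>y. 0 \<le> y \<bullet> (A *v y)" and x: "x \<bullet> (A *v x) = 0"
  shows "A *v x = 0"
proof -
  let ?y = "A *v x"
  have "0 \<le> 2 * t * (?y \<bullet> ?y) + t\<^sup>2 * (?y \<bullet> (A *v ?y))" for t
  proof -
    have "?y \<bullet> (A *v x) = x \<bullet> (A *v ?y)"
      by (rule inner_symmetric_matrix[OF sym])
    then have "(x + t *\<^sub>R ?y) \<bullet> (A *v (x + t *\<^sub>R ?y)) = 2 * t * (?y \<bullet> ?y) + t\<^sup>2 * (?y \<bullet> (A *v ?y))"
      using x by (simp add: matrix_vector_right_distrib inner_add_left inner_add_right
          power2_eq_square algebra_simps)
    then show ?thesis
      using psd by metis
  qed
  then have "?y \<bullet> ?y = 0"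
    by (rule nonneg_quadratic_linear_coeff_eq_0)
  then show ?thesis
    by simp
qed

lemma quadratic_form_min_on_sphere:
  fixes M :: "real^'n^'n"
  obtains x0 where "norm x0 = 1" "\<And>y. (x0 \<bullet> (M *v x0)) * (norm y)\<^sup>2 \<le> y \<bullet> (M *v y)"
proof -
  have "continuous_on (sphere 0 1) (\<lambda>x. x \<bullet> (M *v x))"
    by (intro continuous_intros linear_continuous_on) auto
  then obtain x0 where x0: "norm x0 = 1"
    and min: "\<And>y. norm y = 1 \<Longrightarrow> x0 \<bullet> (M *v x0) \<le> y \<bullet> (M *v y)"
    using continuous_attains_inf[OF compact_sphere, of 0 1] by fastforce
  have "(x0 \<bullet> (M *v x0)) * (norm y)\<^sup>2 \<le> y \<bullet> (M *v y)" for y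
  proof (cases "y = 0")
    case False
    have "x0 \<bullet> (M *v x0) \<le> (y /\<^sub>R norm y) \<bullet> (M *v (y /\<^sub>R norm y))"
      using False by (intro min) simp
    also have "\<dots> = (y \<bullet> (M *v y)) / (norm y)\<^sup>2"
      by (simp add: matrix_vector_mult_scaleR power2_eq_square divide_inverse)
    finally show ?thesis
      using False by (simp add: field_simps)
  qed simp
  with x0 show ?thesis
    using that by blast
qed

lemma sigma_min_le_quadratic_form:
  fixes M :: "real^'n^'n"
  assumes sym: "transpose M = M" and psd: "\<And>y. 0 \<le> y \<bullet> (M *v y)"
  shows "sigma_min M * (norm x)\<^sup>2 \<le> x \<bullet> (M *v x)"
proof -
  obtain x0 where x0: "norm x0 = 1" and \<mu>_le: "\<And>y. (x0 \<bullet> (M *v x0)) * (norm y)\<^sup>2 \<le> y \<bullet> (M *v y)"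
    using quadratic_form_min_on_sphere[of M] by blast
  define \<mu> where "\<mu> = x0 \<bullet> (M *v x0)"
  note \<mu>_le = \<mu>_le[folded \<mu>_def]
  \<comment> \<open>\<open>x0\<close> minimises the quadratic form of the positive semidefinite \<open>M - \<mu> I\<close>, so it is an eigenvector.\<close>
  have "(M - \<mu> *\<^sub>R mat 1) *v x0 = 0"
  proof (rule psd_quadratic_form_eq_0D)
    show "transpose (M - \<mu> *\<^sub>R mat 1) = M - \<mu> *\<^sub>R mat 1"
    proof -
      have "transpose (M - \<mu> *\<^sub>R mat 1) = transpose M - \<mu> *\<^sub>R mat 1"
        by (simp add: transpose_def vec_eq_iff mat_def)
      then show ?thesis
        using sym by simp
    qed
    show "0 \<le> y \<bullet> ((M - \<mu> *\<^sub>R mat 1) *v y)" for y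
      using \<mu>_le[of y] by (simp add: matrix_vector_mult_diff_rdistrib scaleR_matrix_vector_assoc[symmetric]
          power2_norm_eq_inner inner_diff_right)
    show "x0 \<bullet> ((M - \<mu> *\<^sub>R mat 1) *v x0) = 0"
      using x0 by (simp add: \<mu>_def matrix_vector_mult_diff_rdistrib scaleR_matrix_vector_assoc[symmetric]
          inner_diff_right dot_square_norm)
  qed
  then have "M *v x0 = \<mu> *\<^sub>R x0"
    by (simp add: matrix_vector_mult_diff_rdistrib scaleR_matrix_vector_assoc[symmetric])
  moreover have "0 \<le> \<mu>"
    unfolding \<mu>_def by (rule psd)
  ultimately have "norm (M *v x0) = \<mu>"
    using x0 by simp
  then have "sigma_min M \<le> \<mu>"
    unfolding sigma_min_def using x0 by (intro cInf_lower bdd_belowI[of _ 0]) auto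
  then show ?thesis
    using \<mu>_le[of x] by (meson order_trans mult_right_mono zero_le_power2)
qed

section \<open>Gradients and Jacobians\<close>

lemma grad_eqI:
  assumes "GDERIV f x :> g"
  shows "grad f x = g"
proof -
  have "g' = g" if "GDERIV f x :> g'" for g'
  proof -
    have "(\<lambda>h. h \<bullet> g') = (\<lambda>h. h \<bullet> g)"
      using has_derivative_unique that assms unfolding gderiv_def by blast
    then show ?thesis by (metis vector_eq_ldot)
  qed
  then show ?thesis
    unfolding grad_def using assms by (rule the_equality[rotated])
qed

lemma gderiv_grad:
  fixes f :: "'a::euclidean_space \<Rightarrow> real"
  assumes "f differentiable (at x)"
  shows "GDERIV f x :> grad f x"
proof -
  obtain D where D: "(f has_derivative D) (at x)"
    using assms differentiable_def by blast
  have "D = (\<lambda>h. h \<bullet> adjoint D 1)"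
    using adjoint_works[OF has_derivative_linear[OF D]] by fastforce
  then have "GDERIV f x :> adjoint D 1"
    using D unfolding gderiv_def by simp
  then show ?thesis
    by (simp add: grad_eqI)
qed

lemma jac_eqI:
  assumes "(F has_derivative (\<lambda>h. D *v h)) (at x)"
  shows "jac F x = D"
proof -
  have "D' = D" if "(F has_derivative (\<lambda>h. D' *v h)) (at x)" for D'
    using has_derivative_unique[OF that assms] by (metis matrix_eq)
  then show ?thesis
    unfolding jac_def using assms by (rule the_equality[rotated])
qed

lemma gderiv_half_norm_squared:
  fixes F :: "real^'n \<Rightarrow> real^'m"
  assumes "(F has_derivative (\<lambda>h. D *v h)) (at x)"
  shows "GDERIV (\<lambda>t. (norm (F t))\<^sup>2 / 2) x :> transpose D *v F x"
proof -
  have "((\<lambda>t. (F t \<bullet> F t) / 2) has_derivative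
          (\<lambda>h. (F x \<bullet> (D *v h) + (D *v h) \<bullet> F x) / 2)) (at x)"
    by (auto intro!: derivative_eq_intros assms)
  moreover have "(F x \<bullet> (D *v h) + (D *v h) \<bullet> F x) / 2 = h \<bullet> (transpose D *v F x)" for h
  proof -
    have "(D *v h) \<bullet> F x = h \<bullet> (transpose D *v F x)"
      by (metis dot_lmul_matrix inner_commute transpose_matrix_vector)
    then show ?thesis
      by (simp add: inner_commute)
  qed
  ultimately show ?thesis
    unfolding gderiv_def by (simp add: power2_norm_eq_inner)
qed

lemma norm_derivative_le_of_lipschitz:
  fixes f :: "'a::real_normed_vector \<Rightarrow> 'b::real_normed_vector"
  assumes f': "(f has_derivative f') (at x)"
    and lip: "\<And>y. norm (f y - f x) \<le> L * norm (y - x)"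
  shows "norm (f' h) \<le> L * norm h"
proof (cases "h = 0")
  case True
  then show ?thesis
    using linear_0[OF has_derivative_linear[OF f']] by simp
next
  case False
  show ?thesis
  proof (rule field_le_epsilon)
    fix e :: real
    assume "0 < e"
    then obtain d where "0 < d"
      and d: "\<And>y. norm (y - x) < d \<Longrightarrow> norm (f y - f x - f' (y - x)) \<le> e / norm h * norm (y - x)"
      using f' False unfolding has_derivative_at_alt by (meson divide_pos_pos zero_less_norm_iff)
    define t where "t = d / (2 * norm h)"
    have t: "0 < t" "norm ((x + t *\<^sub>R h) - x) < d"
      using \<open>0 < d\<close> False by (auto simp: t_def)
    have lin: "f' (t *\<^sub>R h) = t *\<^sub>R f' h"
      using linear_scale[OF has_derivative_linear[OF f']] .
    have "t * norm (f' h) \<le> norm (f (x + t *\<^sub>R h) - f x) + norm (f (x + t *\<^sub>R h) - f x - f' (t *\<^sub>R h))"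
      using norm_triangle_ineq3[of "f (x + t *\<^sub>R h) - f x" "f' (t *\<^sub>R h)"] t lin
      by (simp add: norm_minus_commute)
    also have "\<dots> \<le> L * (t * norm h) + e / norm h * (t * norm h)"
      using lip[of "x + t *\<^sub>R h"] d[OF t(2)] t by (intro add_mono) auto
    also have "\<dots> = t * (L * norm h + e)"
      using False by (simp add: field_simps)
    finally show "norm (f' h) \<le> L * norm h + e"
      using t by simp
  qed
qed

lemma gderiv_quadratic_form:
  fixes M :: "real^'n^'n"
  assumes "transpose M = M"
  shows "GDERIV (\<lambda>t. (t - c) \<bullet> (M *v (t - c))) x :> 2 *\<^sub>R (M *v (x - c))"
proof -
  have "((\<lambda>t. (t - c) \<bullet> (M *v (t - c))) has_derivative
      (\<lambda>h. h \<bullet> (M *v (x - c)) + (x - c) \<bullet> (M *v h))) (at x)"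
    by (auto intro!: derivative_eq_intros bounded_linear.has_derivative[OF matrix_vector_mul_bounded_linear])
  then show ?thesis
    unfolding gderiv_def using inner_symmetric_matrix[OF assms, of "x - c"]
    by (simp add: inner_scaleR_right)
qed

section \<open>Block lower-triangular systems\<close>

lemma triangular_recurrence_bound:
  fixes a :: "nat \<Rightarrow> real"
  assumes m: "0 < m" and A: "0 \<le> A" and b: "0 \<le> b"
    and rec: "\<And>i. i \<in> {1..n} \<Longrightarrow> m * a i \<le> b + A * (\<Sum>k=1..<i. a k)"
    and i: "i \<in> {1..n}"
  shows "a i \<le> (1 + A / m) ^ n * b / m"
proof -
  \<comment> \<open>Each step multiplies the residual \<open>b + A * (partial sum)\<close> by at most \<open>1 + A / m\<close>.\<close>
  have partial: "b + A * (\<Sum>k=1..j. a k) \<le> (1 + A / m) ^ j * b" if "j \<le> n" for j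
    using that
  proof (induction j)
    case (Suc j)
    have "m * a (Suc j) \<le> b + A * (\<Sum>k=1..j. a k)"
      using rec[of "Suc j"] Suc.prems by (simp add: atLeastLessThanSuc_atLeastAtMost)
    from mult_left_mono[OF this A]
    have "A * a (Suc j) \<le> A / m * (b + A * (\<Sum>k=1..j. a k))"
      using m by (simp add: field_simps)
    then have "b + A * (\<Sum>k=1..Suc j. a k) \<le> (1 + A / m) * (b + A * (\<Sum>k=1..j. a k))"
      by (simp add: algebra_simps)
    also have "\<dots> \<le> (1 + A / m) * ((1 + A / m) ^ j * b)"
      using Suc m A by (intro mult_left_mono) auto
    finally show ?case
      by simp
  qed simp
  have "{1..<i} = {1..i - 1}"
    using i by auto
  then have "m * a i \<le> b + A * (\<Sum>k=1..i - 1. a k)"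
    using rec[OF i] by simp
  also have "\<dots> \<le> (1 + A / m) ^ (i - 1) * b"
    using i by (intro partial) auto
  also have "\<dots> \<le> (1 + A / m) ^ n * b"
    using m A b i by (intro mult_right_mono power_increasing) auto
  finally show ?thesis
    using m by (simp add: field_simps)
qed

definition coercive_block_triangular :: "nat \<Rightarrow> real \<Rightarrow> real \<Rightarrow> (nat \<Rightarrow> nat \<Rightarrow> real^'n^'n) \<Rightarrow> bool"
  where "coercive_block_triangular N m A B \<longleftrightarrow>
    (\<forall>i\<in>{1..N}. \<forall>x. m * (norm x)\<^sup>2 \<le> x \<bullet> (B i i *v x)) \<and>
    (\<forall>i\<in>{1..N}. \<forall>k\<in>{1..N}. (i < k \<longrightarrow> B i k = 0) \<and> (k < i \<longrightarrow> norm (B i k) \<le> A))"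

definition triangular_solve_const :: "nat \<Rightarrow> real \<Rightarrow> real \<Rightarrow> real"
  where "triangular_solve_const N m A = real N * ((1 + A / m) ^ N / m)\<^sup>2"

lemma triangular_solve_const_pos:
  assumes "1 \<le> N" "0 < m" "0 \<le> A"
  shows "0 < triangular_solve_const N m A"
proof -
  have "0 < (1 + A / m) ^ N / m"
    using assms by (simp add: add_pos_nonneg)
  then show ?thesis
    using assms unfolding triangular_solve_const_def by (intro mult_pos_pos zero_less_power) auto
qed

lemma coercive_block_triangular_row_bound:
  fixes B :: "nat \<Rightarrow> nat \<Rightarrow> real^'n^'n"
  assumes B: "coercive_block_triangular N m A B" and i: "i \<in> {1..N}"
  shows "m * norm (v i) \<le> norm (\<Sum>k=1..N. B i k *v v k) + A * (\<Sum>k=1..<i. norm (v k))"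
proof -
  have "(\<Sum>k=i..N. B i k *v v k) = B i i *v v i"
    using i B by (subst sum.atLeast_Suc_atMost) (auto simp: coercive_block_triangular_def intro!: sum.neutral)
  moreover have "{1..N} = {1..<i} \<union> {i..N}"
    using i by auto
  moreover have "{1..<i} \<inter> {i..N} = {}"
    by auto
  ultimately have row: "(\<Sum>k=1..N. B i k *v v k) = (\<Sum>k=1..<i. B i k *v v k) + B i i *v v i"
    by (simp add: sum.union_disjoint)
  have "norm (\<Sum>k=1..<i. B i k *v v k) \<le> (\<Sum>k=1..<i. A * norm (v k))"
  proof (rule sum_norm_le)
    fix k
    assume "k \<in> {1..<i}"
    then have "norm (B i k) \<le> A"
      using B i by (auto simp: coercive_block_triangular_def)
    then show "norm (B i k *v v k) \<le> A * norm (v k)"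
      by (meson norm_matrix_vector_mult_le mult_right_mono norm_ge_zero order_trans)
  qed
  moreover have "m * norm (v i) \<le> norm (B i i *v v i)"
    using B i by (intro norm_ge_of_inner_ge) (auto simp: coercive_block_triangular_def)
  ultimately show ?thesis
    unfolding row sum_distrib_left[symmetric]
    by (smt (verit) norm_triangle_ineq4 add_diff_cancel_left')
qed

lemma coercive_block_triangular_solve:
  fixes B :: "nat \<Rightarrow> nat \<Rightarrow> real^'n^'n"
  assumes B: "coercive_block_triangular N m A B" and m: "0 < m" and A: "0 \<le> A"
  shows "(\<Sum>k=1..N. (norm (v k))\<^sup>2)
    \<le> triangular_solve_const N m A * (\<Sum>i=1..N. (norm (\<Sum>k=1..N. B i k *v v k))\<^sup>2)"
proof -
  define b where "b = L2_set (\<lambda>i. norm (\<Sum>k=1..N. B i k *v v k)) {1..N}"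
  have "m * norm (v i) \<le> b + A * (\<Sum>k=1..<i. norm (v k))" if "i \<in> {1..N}" for i
  proof -
    have "norm (\<Sum>k=1..N. B i k *v v k) \<le> b"
      unfolding b_def using that by (intro member_le_L2_set) auto
    then show ?thesis
      using coercive_block_triangular_row_bound[OF B that, of v] by linarith
  qed
  then have "norm (v i) \<le> (1 + A / m) ^ N * b / m" if "i \<in> {1..N}" for i
    using m A that by (intro triangular_recurrence_bound[where a="\<lambda>k. norm (v k)"]) (auto simp: b_def)
  then have "(\<Sum>k=1..N. (norm (v k))\<^sup>2) \<le> (\<Sum>k=1..N. ((1 + A / m) ^ N * b / m)\<^sup>2)"
    by (intro sum_mono power_mono) auto
  also have "\<dots> = triangular_solve_const N m A * b\<^sup>2"
    by (simp add: triangular_solve_const_def power_mult_distrib power_divide)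
  also have "b\<^sup>2 = (\<Sum>i=1..N. (norm (\<Sum>k=1..N. B i k *v v k))\<^sup>2)"
    unfolding b_def L2_set_def by (simp add: sum_nonneg)
  finally show ?thesis .
qed

lemma coercive_block_triangular_reflect:
  fixes B :: "nat \<Rightarrow> nat \<Rightarrow> real^'n^'n"
  assumes "coercive_block_triangular N m A B"
  shows "coercive_block_triangular N m A (\<lambda>i k. transpose (B (N + 1 - k) (N + 1 - i)))"
proof -
  have "N + 1 - i \<in> {1..N}" if "i \<in> {1..N}" for i
    using that by auto
  moreover have "N + 1 - k < N + 1 - i" if "i < k" "k \<in> {1..N}" for i k
    using that by auto
  moreover have "transpose (0 :: real^'n^'n) = 0"
    by (simp add: transpose_def vec_eq_iff)
  ultimately show ?thesis
    using assms unfolding coercive_block_triangular_def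
    by (simp add: quadratic_form_transpose norm_transpose del: transpose_matrix_vector)
qed

lemma coercive_block_triangular_solve_transpose:
  fixes B :: "nat \<Rightarrow> nat \<Rightarrow> real^'n^'n"
  assumes B: "coercive_block_triangular N m A B" and m: "0 < m" and A: "0 \<le> A"
  shows "(\<Sum>i=1..N. (norm (g i))\<^sup>2)
    \<le> triangular_solve_const N m A * (\<Sum>k=1..N. (norm (\<Sum>i=1..N. transpose (B i k) *v g i))\<^sup>2)"
proof -
  \<comment> \<open>Read backwards, the transposed system is again block lower triangular.\<close>
  have rev: "(\<Sum>i=1..N. f i) = (\<Sum>i=1..N. f (N + 1 - i))" for f :: "nat \<Rightarrow> 'a::comm_monoid_add"
    using sum.atLeastAtMost_rev[of f 1 N] by simp
  have "(\<Sum>i=1..N. (norm (g (N + 1 - i)))\<^sup>2) \<le> triangular_solve_const N m A *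
      (\<Sum>k=1..N. (norm (\<Sum>i=1..N. transpose (B (N + 1 - i) (N + 1 - k)) *v g (N + 1 - i)))\<^sup>2)"
    using coercive_block_triangular_solve[OF coercive_block_triangular_reflect[OF B] m A] .
  moreover have "(\<Sum>i=1..N. transpose (B i j) *v g i)
      = (\<Sum>i=1..N. transpose (B (N + 1 - i) j) *v g (N + 1 - i))" for j
    by (rule rev)
  ultimately show ?thesis
    by (subst (1 2) rev) simp
qed

lemma block_sigma_min_cong:
  assumes "\<And>i k. i \<in> {1..N} \<Longrightarrow> k \<in> {1..N} \<Longrightarrow> B i k = B' i k"
  shows "block_sigma_min N B = block_sigma_min N B'"
proof -
  have "(\<Sum>i=1..N. (norm (\<Sum>k=1..N. B i k *v v k))\<^sup>2) = (\<Sum>i=1..N. (norm (\<Sum>k=1..N. B' i k *v v k))\<^sup>2)" for v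
    using assms by (auto intro!: sum.cong)
  then show ?thesis
    unfolding block_sigma_min_def by simp
qed

lemma block_sigma_min_ge:
  fixes B :: "nat \<Rightarrow> nat \<Rightarrow> real^'n^'n"
  assumes N: "1 \<le> N" and C: "0 < C"
    and solve: "\<And>v. (\<Sum>k=1..N. (norm (v k))\<^sup>2) \<le> C * (\<Sum>i=1..N. (norm (\<Sum>k=1..N. B i k *v v k))\<^sup>2)"
  shows "1 / sqrt C \<le> block_sigma_min N B"
  unfolding block_sigma_min_def
proof (rule cInf_greatest)
  obtain e :: "real^'n" where e: "norm e = 1"
    using vector_choose_size[of 1] by auto
  have "(\<Sum>k=1..N. (norm (if k = 1 then e else 0))\<^sup>2) = (\<Sum>k=1..N. if k = 1 then 1 else 0)"
    by (intro sum.cong) (auto simp: e)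
  also have "\<dots> = 1"
    using N by simp
  finally have "(\<Sum>k=1..N. (norm (if k = 1 then e else 0))\<^sup>2) = 1" .
  then show "{sqrt (\<Sum>i=1..N. (norm (\<Sum>k=1..N. B i k *v v k))\<^sup>2) | v.
      (\<Sum>k=1..N. (norm (v k))\<^sup>2) = 1} \<noteq> {}"
    by auto
next
  fix s
  assume "s \<in> {sqrt (\<Sum>i=1..N. (norm (\<Sum>k=1..N. B i k *v v k))\<^sup>2) | v.
      (\<Sum>k=1..N. (norm (v k))\<^sup>2) = 1}"
  then obtain v where s: "s = sqrt (\<Sum>i=1..N. (norm (\<Sum>k=1..N. B i k *v v k))\<^sup>2)"
    and v: "(\<Sum>k=1..N. (norm (v k))\<^sup>2) = 1"
    by blast
  have "1 / C \<le> (\<Sum>i=1..N. (norm (\<Sum>k=1..N. B i k *v v k))\<^sup>2)"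
    using solve[of v] v C by (simp add: field_simps)
  then have "sqrt (1 / C) \<le> s"
    unfolding s by (rule real_sqrt_le_mono)
  then show "1 / sqrt C \<le> s"
    by (simp add: real_sqrt_divide)
qed

section \<open>The frame energies\<close>

lemma less_divide_square_of_less_sqrt:
  fixes L d s :: real
  assumes "0 < L" "0 < d" "d < sqrt (s / L)"
  shows "L < s / d\<^sup>2"
proof -
  have "d\<^sup>2 < (sqrt (s / L))\<^sup>2"
    using assms by (intro power_strict_mono) auto
  moreover have "0 < s / L"
    using assms by (metis less_trans real_sqrt_le_0_iff not_le)
  ultimately have "d\<^sup>2 < s / L"
    by simp
  then show ?thesis
    using assms by (simp add: field_simps)
qed

lemma diff_INF_le_of_nonneg:
  fixes f :: "'a \<Rightarrow> real"
  assumes "\<And>s. 0 \<le> f s"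
  shows "f x - (INF s. f s) \<le> f x"
  using assms by (simp add: cINF_greatest)

definition second_diff :: "(nat \<Rightarrow> real) \<Rightarrow> real^'n \<Rightarrow> real^'n \<Rightarrow> (nat \<Rightarrow> real^'n) \<Rightarrow> nat \<Rightarrow> real^'n"
  where "second_diff \<delta> th0 thm1 th i =
    frame th0 thm1 th (int i) - (1 + \<delta> i / \<delta> (i - 1)) *\<^sub>R frame th0 thm1 th (int i - 1)
      + (\<delta> i / \<delta> (i - 1)) *\<^sub>R frame th0 thm1 th (int i - 2)"

definition second_diff_coeff :: "(nat \<Rightarrow> real) \<Rightarrow> nat \<Rightarrow> nat \<Rightarrow> real"
  where "second_diff_coeff \<delta> i k =
    (if k = i then 1 else 0) - (1 + \<delta> i / \<delta> (i - 1)) * (if int k = int i - 1 then 1 else 0)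
      + \<delta> i / \<delta> (i - 1) * (if int k = int i - 2 then 1 else 0)"

lemma Ebar_second_diff:
  "Ebar M \<delta> P u \<iota> th0 thm1 th i =
    Mnorm2 M (second_diff \<delta> th0 thm1 th i) / (2 * (\<delta> i)\<^sup>2) + P (th i) (u (\<iota> i))"
  unfolding Ebar_def second_diff_def Let_def ..

lemma second_diff_upd:
  assumes "1 \<le> k"
  shows "second_diff \<delta> th0 thm1 (th(k := t)) i
    = second_diff \<delta> th0 thm1 th i + second_diff_coeff \<delta> i k *\<^sub>R (t - th k)"
proof -
  have "frame th0 thm1 (th(k := t)) j = frame th0 thm1 th j + (if j = int k then t - th k else 0)" for j
    using assms unfolding frame_def by (auto simp: nat_eq_iff)
  then show ?thesis
    unfolding second_diff_def second_diff_coeff_def by (simp add: algebra_simps)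
qed

lemma second_diff_coeff_diag [simp]: "second_diff_coeff \<delta> i i = 1"
  unfolding second_diff_coeff_def by simp

lemma second_diff_coeff_upper: "i < k \<Longrightarrow> second_diff_coeff \<delta> i k = 0"
  unfolding second_diff_coeff_def by auto

lemma abs_second_diff_coeff_le:
  "0 \<le> \<delta> i / \<delta> (i - 1) \<Longrightarrow> \<bar>second_diff_coeff \<delta> i k\<bar> \<le> 1 + \<delta> i / \<delta> (i - 1)"
  unfolding second_diff_coeff_def by auto

definition jac_block :: "real^'n^'n \<Rightarrow> (nat \<Rightarrow> real) \<Rightarrow> (real^'n \<Rightarrow> 'u \<Rightarrow> real) \<Rightarrow> (nat \<Rightarrow> 'u)
    \<Rightarrow> (nat \<Rightarrow> nat) \<Rightarrow> (nat \<Rightarrow> real^'n) \<Rightarrow> nat \<Rightarrow> nat \<Rightarrow> real^'n^'n"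
  where "jac_block M \<delta> P u \<iota> th i k =
    (second_diff_coeff \<delta> i k / (\<delta> i)\<^sup>2) *\<^sub>R M
      + (if k = i then jac (grad (\<lambda>z. P z (u (\<iota> i)))) (th i) else 0)"

lemma jac_block_upper: "i < k \<Longrightarrow> jac_block M \<delta> P u \<iota> th i k = 0"
  unfolding jac_block_def by (simp add: second_diff_coeff_upper)

lemma norm_jac_block_offdiag:
  assumes "k \<noteq> i" and "0 \<le> \<delta> i / \<delta> (i - 1)"
  shows "norm (jac_block M \<delta> P u \<iota> th i k) \<le> (1 + \<delta> i / \<delta> (i - 1)) / (\<delta> i)\<^sup>2 * norm M"
  using assms abs_second_diff_coeff_le[of \<delta> i k]
  by (simp add: jac_block_def divide_right_mono mult_right_mono)

locale frame_energy =
  fixes M :: "real^'n^'n" and P :: "real^'n \<Rightarrow> 'u \<Rightarrow> real"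
  assumes M_sym: "transpose M = M"
    and P_diff: "\<And>v x. (\<lambda>y. P y v) differentiable (at x)"
    and grad_P_diff: "\<And>v x. (grad (\<lambda>z. P z v) has_derivative (\<lambda>h. jac (grad (\<lambda>z. P z v)) x *v h)) (at x)"
begin

lemma Gi_eq:
  assumes "1 \<le> i"
  shows "Gi M \<delta> P u \<iota> th0 thm1 th i =
    (1 / (\<delta> i)\<^sup>2) *\<^sub>R (M *v second_diff \<delta> th0 thm1 th i) + grad (\<lambda>z. P z (u (\<iota> i))) (th i)"
proof -
  define y where "y = second_diff \<delta> th0 thm1 th i"
  let ?p = "\<lambda>z. P z (u (\<iota> i))"
  have "(\<lambda>t. Ebar M \<delta> P u \<iota> th0 thm1 (th(i := t)) i) =
      (\<lambda>t. 1 / (2 * (\<delta> i)\<^sup>2) * ((t - (th i - y)) \<bullet> (M *v (t - (th i - y)))) + ?p t)"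
  proof -
    have shift: "y + (t - th i) = t - (th i - y)" for t
      by (simp add: algebra_simps)
    show ?thesis
      using assms by (simp add: Ebar_second_diff second_diff_upd Mnorm2_def y_def[symmetric] shift)
  qed
  moreover have "GDERIV (\<lambda>t. 1 / (2 * (\<delta> i)\<^sup>2) * ((t - (th i - y)) \<bullet> (M *v (t - (th i - y)))) + ?p t) (th i)
      :> (1 / (\<delta> i)\<^sup>2) *\<^sub>R (M *v y) + grad ?p (th i)"
  proof (rule GDERIV_add[OF GDERIV_subst gderiv_grad[OF P_diff]])
    show "GDERIV (\<lambda>t. 1 / (2 * (\<delta> i)\<^sup>2) * ((t - (th i - y)) \<bullet> (M *v (t - (th i - y))))) (th i)
        :> (1 / (2 * (\<delta> i)\<^sup>2)) *\<^sub>R (2 *\<^sub>R (M *v (th i - (th i - y)))) +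
           ((th i - (th i - y)) \<bullet> (M *v (th i - (th i - y)))) *\<^sub>R 0"
      by (rule GDERIV_mult[OF GDERIV_const gderiv_quadratic_form[OF M_sym]])
  qed simp
  ultimately show ?thesis
    unfolding Gi_def y_def by (simp add: grad_eqI)
qed

lemma Gi_has_derivative:
  assumes i: "1 \<le> i" and k: "1 \<le> k"
  shows "((\<lambda>t. Gi M \<delta> P u \<iota> th0 thm1 (th(k := t)) i) has_derivative
    (\<lambda>h. jac_block M \<delta> P u \<iota> th i k *v h)) (at (th k))"
proof -
  define y where "y = second_diff \<delta> th0 thm1 th i"
  define c where "c = second_diff_coeff \<delta> i k"
  let ?g = "grad (\<lambda>z. P z (u (\<iota> i)))"
  have Gi_upd: "(\<lambda>t. Gi M \<delta> P u \<iota> th0 thm1 (th(k := t)) i) =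
      (\<lambda>t. (1 / (\<delta> i)\<^sup>2) *\<^sub>R (M *v (y + c *\<^sub>R (t - th k))) + ?g ((th(k := t)) i))"
    using i k by (simp add: Gi_eq second_diff_upd y_def c_def)
  have "((\<lambda>t. (1 / (\<delta> i)\<^sup>2) *\<^sub>R (M *v (y + c *\<^sub>R (t - th k)))) has_derivative
      (\<lambda>h. (1 / (\<delta> i)\<^sup>2) *\<^sub>R (M *v (c *\<^sub>R h)))) (at (th k))"
    by (auto intro!: derivative_eq_intros bounded_linear.has_derivative[OF matrix_vector_mul_bounded_linear])
  moreover have "((\<lambda>t. ?g ((th(k := t)) i)) has_derivative
      (\<lambda>h. (if k = i then jac ?g (th i) else 0) *v h)) (at (th k))"
    using grad_P_diff by (cases "k = i") auto
  ultimately have "((\<lambda>t. Gi M \<delta> P u \<iota> th0 thm1 (th(k := t)) i) has_derivative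
      (\<lambda>h. (1 / (\<delta> i)\<^sup>2) *\<^sub>R (M *v (c *\<^sub>R h)) + (if k = i then jac ?g (th i) else 0) *v h))
      (at (th k))"
    unfolding Gi_upd by (rule has_derivative_add)
  moreover have "(1 / (\<delta> i)\<^sup>2) *\<^sub>R (M *v (c *\<^sub>R h)) + (if k = i then jac ?g (th i) else 0) *v h
      = jac_block M \<delta> P u \<iota> th i k *v h" for h
    by (simp add: jac_block_def c_def matrix_vector_mult_add_rdistrib matrix_vector_mult_scaleR
        scaleR_matrix_vector_assoc[symmetric])
  ultimately show ?thesis
    by simp
qed

lemma Jblock_eq:
  "1 \<le> i \<Longrightarrow> 1 \<le> k \<Longrightarrow> Jblock M \<delta> P u \<iota> th0 thm1 th i k = jac_block M \<delta> P u \<iota> th i k"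
  unfolding Jblock_def by (intro jac_eqI Gi_has_derivative)

lemma grad_Lam_i:
  assumes "1 \<le> i"
  shows "grad (\<lambda>s. Lam_i M \<delta> P u \<iota> th0 thm1 (th(i := s)) i) t =
    transpose (jac_block M \<delta> P u \<iota> (th(i := t)) i i) *v Gi M \<delta> P u \<iota> th0 thm1 (th(i := t)) i"
proof -
  have "GDERIV (\<lambda>s. (norm (Gi M \<delta> P u \<iota> th0 thm1 ((th(i := t))(i := s)) i))\<^sup>2 / 2) t
      :> transpose (jac_block M \<delta> P u \<iota> (th(i := t)) i i) *v Gi M \<delta> P u \<iota> th0 thm1 (th(i := t)) i"
    using gderiv_half_norm_squared[OF Gi_has_derivative[OF assms assms, of \<delta> u \<iota> th0 thm1 "th(i := t)"]]
    by simp
  then show ?thesis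
    unfolding Lam_i_def by (simp add: grad_eqI)
qed

lemma grad_Lam:
  assumes "1 \<le> k"
  shows "grad (\<lambda>t. Lam N M \<delta> P u \<iota> th0 thm1 (th(k := t))) (th k) =
    (\<Sum>i=1..N. transpose (jac_block M \<delta> P u \<iota> th i k) *v Gi M \<delta> P u \<iota> th0 thm1 th i)"
proof -
  have "((\<lambda>t. (norm (Gi M \<delta> P u \<iota> th0 thm1 (th(k := t)) i))\<^sup>2 / 2) has_derivative
      (\<lambda>h. h \<bullet> (transpose (jac_block M \<delta> P u \<iota> th i k) *v Gi M \<delta> P u \<iota> th0 thm1 th i))) (at (th k))"
    if "i \<in> {1..N}" for i
    using gderiv_half_norm_squared[OF Gi_has_derivative[of i k]] that assms
    unfolding gderiv_def by simp
  then have "GDERIV (\<lambda>t. Lam N M \<delta> P u \<iota> th0 thm1 (th(k := t))) (th k) :>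
      (\<Sum>i=1..N. transpose (jac_block M \<delta> P u \<iota> th i k) *v Gi M \<delta> P u \<iota> th0 thm1 th i)"
    unfolding gderiv_def Lam_def Lam_i_def inner_sum_right by (rule has_derivative_sum)
  then show ?thesis
    by (rule grad_eqI)
qed

lemma jac_block_diag_coercive:
  assumes psd: "\<And>x. 0 \<le> x \<bullet> (M *v x)"
    and lip: "\<And>v x x'. norm (grad (\<lambda>z. P z v) x - grad (\<lambda>z. P z v) x') \<le> L * norm (x - x')"
  shows "(sigma_min M / (\<delta> i)\<^sup>2 - L) * (norm x)\<^sup>2 \<le> x \<bullet> (jac_block M \<delta> P u \<iota> th i i *v x)"
proof -
  let ?H = "jac (grad (\<lambda>z. P z (u (\<iota> i)))) (th i)"
  have "norm (?H *v x) \<le> L * norm x"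
    using grad_P_diff lip by (rule norm_derivative_le_of_lipschitz)
  then have "norm x * norm (?H *v x) \<le> norm x * (L * norm x)"
    by (rule mult_left_mono) simp
  then have "\<bar>x \<bullet> (?H *v x)\<bar> \<le> L * (norm x)\<^sup>2"
    using Cauchy_Schwarz_ineq2[of x "?H *v x"] by (simp add: power2_eq_square mult_ac)
  then have hess: "- (L * (norm x)\<^sup>2) \<le> x \<bullet> (?H *v x)"
    by (simp add: abs_le_iff)
  have "sigma_min M / (\<delta> i)\<^sup>2 * (norm x)\<^sup>2 \<le> (x \<bullet> (M *v x)) / (\<delta> i)\<^sup>2"
    using sigma_min_le_quadratic_form[OF M_sym psd, of x] by (simp add: divide_right_mono)
  moreover have block: "x \<bullet> (jac_block M \<delta> P u \<iota> th i i *v x) = (x \<bullet> (M *v x)) / (\<delta> i)\<^sup>2 + x \<bullet> (?H *v x)"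
    by (simp add: jac_block_def matrix_vector_mult_add_rdistrib scaleR_matrix_vector_assoc[symmetric]
        inner_add_right)
  ultimately show ?thesis
    using hess unfolding block left_diff_distrib by linarith
qed

lemma jac_block_coercive_triangular:
  assumes psd: "\<And>x. 0 \<le> x \<bullet> (M *v x)"
    and lip: "\<And>v x x'. norm (grad (\<lambda>z. P z v) x - grad (\<lambda>z. P z v) x') \<le> L * norm (x - x')"
    and \<delta>_pos: "\<And>i. i \<in> {0..N} \<Longrightarrow> 0 < \<delta> i"
    and m: "\<And>i. i \<in> {1..N} \<Longrightarrow> m \<le> sigma_min M / (\<delta> i)\<^sup>2 - L"
    and A: "\<And>i. i \<in> {1..N} \<Longrightarrow> (1 + \<delta> i / \<delta> (i - 1)) / (\<delta> i)\<^sup>2 * norm M \<le> A"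
  shows "coercive_block_triangular N m A (jac_block M \<delta> P u \<iota> th)"
  unfolding coercive_block_triangular_def
proof (intro conjI ballI allI impI)
  fix i and x :: "real^'n"
  assume "i \<in> {1..N}"
  then have "m * (norm x)\<^sup>2 \<le> (sigma_min M / (\<delta> i)\<^sup>2 - L) * (norm x)\<^sup>2"
    using m by (intro mult_right_mono) auto
  also have "\<dots> \<le> x \<bullet> (jac_block M \<delta> P u \<iota> th i i *v x)"
    using psd lip by (rule jac_block_diag_coercive)
  finally show "m * (norm x)\<^sup>2 \<le> x \<bullet> (jac_block M \<delta> P u \<iota> th i i *v x)" .
next
  fix i k
  assume i: "i \<in> {1..N}" and "k < i"
  then have "0 \<le> \<delta> i / \<delta> (i - 1)"
    using \<delta>_pos by (simp add: less_imp_le)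
  with \<open>k < i\<close> have "norm (jac_block M \<delta> P u \<iota> th i k) \<le> (1 + \<delta> i / \<delta> (i - 1)) / (\<delta> i)\<^sup>2 * norm M"
    by (intro norm_jac_block_offdiag) auto
  then show "norm (jac_block M \<delta> P u \<iota> th i k) \<le> A"
    using A[OF i] by linarith
qed (rule jac_block_upper)

lemma jac_block_uniformly_coercive_triangular:
  assumes N: "1 \<le> N" and L: "0 < L" and psd: "\<And>x. 0 \<le> x \<bullet> (M *v x)"
    and lip: "\<And>v x x'. norm (grad (\<lambda>z. P z v) x - grad (\<lambda>z. P z v) x') \<le> L * norm (x - x')"
    and \<delta>_pos: "\<And>i. i \<in> {0..N} \<Longrightarrow> 0 < \<delta> i"
    and \<delta>_small: "\<And>i. i \<in> {1..N} \<Longrightarrow> \<delta> i < sqrt (sigma_min M / L)"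
  obtains m A where "0 < m" "0 \<le> A"
    "\<And>u \<iota> th. coercive_block_triangular N m A (jac_block M \<delta> P u \<iota> th)"
proof -
  define m where "m = Min ((\<lambda>i. sigma_min M / (\<delta> i)\<^sup>2 - L) ` {1..N})"
  define A where "A = (\<Sum>i=1..N. (1 + \<delta> i / \<delta> (i - 1)) / (\<delta> i)\<^sup>2 * norm M)"
  have A_terms: "0 \<le> (1 + \<delta> i / \<delta> (i - 1)) / (\<delta> i)\<^sup>2 * norm M" if "i \<in> {1..N}" for i
  proof -
    have "0 < \<delta> i" "0 < \<delta> (i - 1)"
      using \<delta>_pos that by auto
    then show ?thesis
      by simp
  qed
  have "0 < m"
    unfolding m_def using N \<delta>_pos \<delta>_small L by (auto simp: less_divide_square_of_less_sqrt)
  moreover have "0 \<le> A"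
    unfolding A_def using A_terms by (rule sum_nonneg)
  moreover have "coercive_block_triangular N m A (jac_block M \<delta> P u \<iota> th)" for u \<iota> th
  proof (rule jac_block_coercive_triangular[OF psd lip \<delta>_pos])
    show "m \<le> sigma_min M / (\<delta> i)\<^sup>2 - L" if "i \<in> {1..N}" for i
      unfolding m_def using that by (intro Min_le) auto
    show "(1 + \<delta> i / \<delta> (i - 1)) / (\<delta> i)\<^sup>2 * norm M \<le> A" if "i \<in> {1..N}" for i
      unfolding A_def using that A_terms by (intro member_le_sum) auto
  qed
  ultimately show ?thesis
    using that by blast
qed

lemma block_sigma_min_Jblock_ge:
  assumes "1 \<le> N" and B: "coercive_block_triangular N m A (jac_block M \<delta> P u \<iota> th)"
    and "0 < m" "0 \<le> A"
  shows "1 / sqrt (triangular_solve_const N m A) \<le> block_sigma_min N (Jblock M \<delta> P u \<iota> th0 thm1 th)"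
proof -
  have "block_sigma_min N (Jblock M \<delta> P u \<iota> th0 thm1 th) = block_sigma_min N (jac_block M \<delta> P u \<iota> th)"
    by (rule block_sigma_min_cong) (simp add: Jblock_eq)
  then show ?thesis
    using assms block_sigma_min_ge[OF _ triangular_solve_const_pos coercive_block_triangular_solve[OF B]]
    by simp
qed

lemma Lam_i_PL:
  assumes i: "i \<in> {1..N}" and m: "0 \<le> m"
    and B: "\<And>th. coercive_block_triangular N m A (jac_block M \<delta> P u \<iota> th)"
  shows "m\<^sup>2 * (Lam_i M \<delta> P u \<iota> th0 thm1 (th(i := t)) i - (INF s. Lam_i M \<delta> P u \<iota> th0 thm1 (th(i := s)) i))
    \<le> (norm (grad (\<lambda>s. Lam_i M \<delta> P u \<iota> th0 thm1 (th(i := s)) i) t))\<^sup>2 / 2"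
proof -
  let ?G = "Gi M \<delta> P u \<iota> th0 thm1 (th(i := t)) i"
  have coercive: "m * (norm x)\<^sup>2 \<le> x \<bullet> (jac_block M \<delta> P u \<iota> th' i i *v x)" for th' x
    using B i unfolding coercive_block_triangular_def by blast
  have "1 \<le> i"
    using i by simp
  have "m * norm ?G \<le> norm (grad (\<lambda>s. Lam_i M \<delta> P u \<iota> th0 thm1 (th(i := s)) i) t)"
    unfolding grad_Lam_i[OF \<open>1 \<le> i\<close>]
    by (intro norm_ge_of_inner_ge) (simp add: quadratic_form_transpose coercive del: transpose_matrix_vector)
  then have "m\<^sup>2 * Lam_i M \<delta> P u \<iota> th0 thm1 (th(i := t)) i
      \<le> (norm (grad (\<lambda>s. Lam_i M \<delta> P u \<iota> th0 thm1 (th(i := s)) i) t))\<^sup>2 / 2"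
    unfolding Lam_i_def using m by (simp add: power_mult_distrib[symmetric] power_mono)
  moreover have "Lam_i M \<delta> P u \<iota> th0 thm1 (th(i := t)) i - (INF s. Lam_i M \<delta> P u \<iota> th0 thm1 (th(i := s)) i)
      \<le> Lam_i M \<delta> P u \<iota> th0 thm1 (th(i := t)) i"
    using diff_INF_le_of_nonneg[of "\<lambda>s. Lam_i M \<delta> P u \<iota> th0 thm1 (th(i := s)) i" t]
    by (simp add: Lam_i_def)
  ultimately show ?thesis
    using m by (meson mult_left_mono order_trans zero_le_power2)
qed

lemma Lam_PL:
  assumes N: "1 \<le> N" and B: "coercive_block_triangular N m A (jac_block M \<delta> P u \<iota> th)"
    and m: "0 < m" and A: "0 \<le> A"
  shows "(1 / triangular_solve_const N m A) *
      (Lam N M \<delta> P u \<iota> th0 thm1 th - (INF s. Lam N M \<delta> P u \<iota> th0 thm1 s))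
    \<le> stacked_grad_norm2 N (Lam N M \<delta> P u \<iota> th0 thm1) th / 2"
proof -
  let ?C = "triangular_solve_const N m A"
  let ?\<Lambda> = "Lam N M \<delta> P u \<iota> th0 thm1"
  have "stacked_grad_norm2 N ?\<Lambda> th =
      (\<Sum>k=1..N. (norm (\<Sum>i=1..N. transpose (jac_block M \<delta> P u \<iota> th i k) *v Gi M \<delta> P u \<iota> th0 thm1 th i))\<^sup>2)"
    unfolding stacked_grad_norm2_def by (intro sum.cong refl) (simp add: grad_Lam)
  then have "2 * ?\<Lambda> th \<le> ?C * stacked_grad_norm2 N ?\<Lambda> th"
    using coercive_block_triangular_solve_transpose[OF B m A, of "Gi M \<delta> P u \<iota> th0 thm1 th"]
    by (simp add: Lam_def Lam_i_def sum_divide_distrib[symmetric])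
  moreover have "?\<Lambda> th - (INF s. ?\<Lambda> s) \<le> ?\<Lambda> th"
    by (rule diff_INF_le_of_nonneg) (simp add: Lam_def Lam_i_def sum_nonneg)
  moreover have "0 < ?C"
    using N m A by (rule triangular_solve_const_pos)
  ultimately show ?thesis
    by (simp add: field_simps)
qed

end

theorem corollary1:
  fixes M :: "real^'n^'n" and N :: nat and \<delta> :: "nat \<Rightarrow> real" and L :: real
    and P :: "real^'n \<Rightarrow> 'u \<Rightarrow> real"
    and th0 thm1 :: "real^'n" and u :: "nat \<Rightarrow> 'u" and \<iota> :: "nat \<Rightarrow> nat"
  assumes M_sym: "transpose M = M"
    and M_pd: "\<forall>x. x \<noteq> 0 \<longrightarrow> x \<bullet> (M *v x) > 0"
    and N_ge: "N \<ge> 1"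
    and \<delta>_pos: "\<forall>i\<in>{0..N}. \<delta> i > 0"
    and \<iota>_range: "\<forall>i\<in>{1..N}. \<iota> i \<in> {1..N}"
    and L_pos: "L > 0"
    and P_diff: "\<forall>v x. (\<lambda>y. P y v) differentiable (at x)"
    and P_twice: "\<forall>v. \<exists>H :: real^'n \<Rightarrow> real^'n^'n.
        (\<forall>x. ((\<lambda>y. grad (\<lambda>z. P z v) y) has_derivative (\<lambda>h. H x *v h)) (at x)) \<and>
        (\<forall>x. \<exists>e>0. \<exists>K. \<forall>y\<in>ball x e. \<forall>z\<in>ball x e. norm (H y - H z) \<le> K * dist y z)"
    and P_weakly_convex: "\<forall>v. convex_on UNIV (\<lambda>x. P x v + L / 2 * (norm x)\<^sup>2)"
    and P_grad_lip: "\<forall>v x x'. norm (grad (\<lambda>z. P z v) x - grad (\<lambda>z. P z v) x') \<le> L * norm (x - x')"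
    and \<delta>_small: "\<forall>i\<in>{1..N}. \<delta> i < sqrt (sigma_min M / L)"
  shows
    "(\<forall>i\<in>{1..N}. \<forall>th :: nat \<Rightarrow> real^'n. \<exists>\<mu>>0. \<forall>t.
        (norm (grad (\<lambda>s. Lam_i M \<delta> P u \<iota> th0 thm1 (th(i := s)) i) t))\<^sup>2 / 2
          \<ge> \<mu> * (Lam_i M \<delta> P u \<iota> th0 thm1 (th(i := t)) i
                  - (INF s. Lam_i M \<delta> P u \<iota> th0 thm1 (th(i := s)) i)))
     \<and> (\<exists>c>0. \<forall>(u' :: nat \<Rightarrow> 'u) \<iota>'. (\<forall>i\<in>{1..N}. \<iota>' i \<in> {1..N}) \<longrightarrow>
          (\<forall>th :: nat \<Rightarrow> real^'n.
             block_sigma_min N (Jblock M \<delta> P u' \<iota>' th0 thm1 th) \<ge> c))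
     \<and> (\<exists>\<mu>>0. \<forall>th :: nat \<Rightarrow> real^'n.
          stacked_grad_norm2 N (Lam N M \<delta> P u \<iota> th0 thm1) th / 2
            \<ge> \<mu> * (Lam N M \<delta> P u \<iota> th0 thm1 th - (INF s. Lam N M \<delta> P u \<iota> th0 thm1 s)))"
proof -
  have grad_P_diff: "(grad (\<lambda>z. P z v) has_derivative (\<lambda>h. jac (grad (\<lambda>z. P z v)) x *v h)) (at x)"
    for v x
    using P_twice jac_eqI by metis
  interpret frame_energy M P
    using M_sym P_diff grad_P_diff by unfold_locales auto
  have M_psd: "0 \<le> x \<bullet> (M *v x)" for x
    using M_pd by (cases "x = 0") (auto simp: less_imp_le)
  obtain m A where m: "0 < m" and A: "0 \<le> A"
    and tri: "\<And>u \<iota> th. coercive_block_triangular N m A (jac_block M \<delta> P u \<iota> th)"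
    using jac_block_uniformly_coercive_triangular[where \<delta> = \<delta>, OF N_ge L_pos M_psd
        P_grad_lip[rule_format] \<delta>_pos[rule_format] \<delta>_small[rule_format]]
    by blast
  let ?C = "triangular_solve_const N m A"
  have C: "0 < ?C"
    using N_ge m A by (rule triangular_solve_const_pos)
  show ?thesis
    apply (intro conjI)
    subgoal
      using m by (intro ballI allI exI[of _ "m\<^sup>2"] conjI Lam_i_PL[OF _ _ tri]) auto
    subgoal
      using C block_sigma_min_Jblock_ge[OF N_ge tri m A] by (intro exI[of _ "1 / sqrt ?C"]) auto
    subgoal
      using C Lam_PL[OF N_ge tri m A] by (intro exI[of _ "1 / ?C"]) auto
    done
qed

end
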